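(* Let $M$ be the set consisting of the empty composition together with all Fibonacci compositions of multiples of $3$ that start with a part $1$; it is a free monoid under concatenation. Give a composition of $3n$ weight $n$. Then the number of primes of $M$ of weight $n$ is the coefficient of $x^n$ in $\dfrac{2x}{1-2x-x^2}$ (i.e. $a_0=0$, $a_1=2$, $a_n=2a_{n-1}+a_{n-2}$ for $n\ge2$), and consequently $$1+\sum_{n\ge1}F_{3n}x^n=1+\frac{2x}{1-4x-x^2}=\Bigl(1-\frac{2x}{1-2x-x^2}\Bigr)^{-1}.$$
   Context: A Fibonacci composition of $N$ is a sequence of parts each equal to $1$ or $2$ with sum $N$. A free monoid is one in which every element factors uniquely as a product of primes (nonempty elements not expressible as a product of two nonempty elements of the monoid). Fibonacci numbers: $F_0=0$, $F_1=1$, $F_n=F_{n-1}+F_{n-2}$. *)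

theory Defs
  imports Main "HOL-Computational_Algebra.Formal_Power_Series" "HOL-Number_Theory.Fib"
begin

definition fib_comp :: "nat \<Rightarrow> nat list \<Rightarrow> bool" where
  "fib_comp N c \<longleftrightarrow> set c \<subseteq> {1, 2} \<and> sum_list c = N"

definition M3 :: "nat list set" where
  "M3 = {[]} \<union> {c. \<exists>k. fib_comp (3 * k) c \<and> c \<noteq> [] \<and> hd c = 1}"

definition weight :: "nat list \<Rightarrow> nat" where
  "weight c = sum_list c div 3"

definition monoid_primes :: "'a list set \<Rightarrow> 'a list set" where
  "monoid_primes S = {p \<in> S. p \<noteq> [] \<and>
      \<not> (\<exists>u v. u \<in> S \<and> v \<in> S \<and> u \<noteq> [] \<and> v \<noteq> [] \<and> p = u @ v)}"

definition free_monoid :: "'a list set \<Rightarrow> bool" where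
  "free_monoid S \<longleftrightarrow> (\<forall>w \<in> S. \<exists>!ps. (\<forall>p \<in> set ps. p \<in> monoid_primes S) \<and> concat ps = w)"

end

theory Submission
  imports Defs
begin

text \<open>
  M is a stable submonoid of the free monoid of lists, hence free, and splitting off the
  first prime factor of an element gives the identity M(x) = 1 + P(x) M(x) between the
  weight generating functions of M and of its primes. An element of M of weight n > 0 is
  a part 1 followed by a Fibonacci composition of 3n - 1, so there are F(3n) of them;
  with F(3n + 6) = 4 F(3n + 3) + F(3n) this gives M(x) = (1 - 2x - x^2) / (1 - 4x - x^2),
  and solving for P(x) gives P(x) = 2x / (1 - 2x - x^2).
\<close>

definition submonoid :: "'a list set \<Rightarrow> bool" where
  "submonoid S \<longleftrightarrow> [] \<in> S \<and> (\<forall>u \<in> S. \<forall>v \<in> S. u @ v \<in> S)"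

text \<open>Schuetzenberger's stability condition; a submonoid of a free monoid is free iff it is stable.\<close>

definition stable_monoid :: "'a list set \<Rightarrow> bool" where
  "stable_monoid S \<longleftrightarrow> (\<forall>u v w. u \<in> S \<longrightarrow> u @ v \<in> S \<longrightarrow> v @ w \<in> S \<longrightarrow> w \<in> S \<longrightarrow> v \<in> S)"

lemma concat_in_submonoid:
  "submonoid S \<Longrightarrow> \<forall>x \<in> set xs. x \<in> S \<Longrightarrow> concat xs \<in> S"
  by (induction xs) (auto simp: submonoid_def)

lemma monoid_primes_subset: "monoid_primes S \<subseteq> S"
  by (auto simp: monoid_primes_def)

lemma Nil_notin_monoid_primes [simp]: "[] \<notin> monoid_primes S"
  by (simp add: monoid_primes_def)

lemma prime_factorisation_exists:
  "w \<in> S \<Longrightarrow> \<exists>ps. (\<forall>p \<in> set ps. p \<in> monoid_primes S) \<and> concat ps = w"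
proof (induction "length w" arbitrary: w rule: less_induct)
  case less
  show ?case
  proof (cases "w = [] \<or> w \<in> monoid_primes S")
    case True
    then show ?thesis by (auto intro: exI[of _ "[]"] exI[of _ "[w]"])
  next
    case False
    then obtain u v where uv: "u \<in> S" "v \<in> S" "u \<noteq> []" "v \<noteq> []" "w = u @ v"
      using less.prems unfolding monoid_primes_def by blast
    then have "length u < length w" "length v < length w"
      by simp_all
    with less.hyps uv obtain us vs where
      "(\<forall>p \<in> set us. p \<in> monoid_primes S) \<and> concat us = u"
      "(\<forall>p \<in> set vs. p \<in> monoid_primes S) \<and> concat vs = v"
      by blast
    with uv show ?thesis by (intro exI[of _ "us @ vs"]) auto
  qed
qed

lemma stable_monoid_prime_prefix_eq:
  assumes "stable_monoid S" and p: "p \<in> monoid_primes S" and q: "q \<in> monoid_primes S"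
    and "w \<in> S" "w' \<in> S" and eq: "p @ w = q @ w'"
  shows "p = q"
proof -
  have not_proper_prefix: False
    if "r \<in> monoid_primes S" "s \<in> monoid_primes S" "r = s @ v" "v @ x = x'" "v \<noteq> []"
       "x \<in> S" "x' \<in> S" for r s v x x'
  proof -
    have "v \<in> S"
      using \<open>stable_monoid S\<close> that monoid_primes_subset unfolding stable_monoid_def by blast
    with that show False unfolding monoid_primes_def by blast
  qed
  from eq obtain v where "p = q @ v \<and> v @ w = w' \<or> p @ v = q \<and> w = v @ w'"
    by (auto simp: append_eq_append_conv2)
  then show ?thesis
    using not_proper_prefix[OF p q _ _ _ \<open>w \<in> S\<close> \<open>w' \<in> S\<close>]
      not_proper_prefix[OF q p _ _ _ \<open>w' \<in> S\<close> \<open>w \<in> S\<close>]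
    by fastforce
qed

lemma prime_factorisation_unique:
  assumes "submonoid S" "stable_monoid S"
    and "\<forall>p \<in> set ps. p \<in> monoid_primes S" "\<forall>q \<in> set qs. q \<in> monoid_primes S"
    and "concat ps = concat qs"
  shows "ps = qs"
  using assms(3-)
proof (induction ps arbitrary: qs)
  case Nil
  then show ?case by (cases qs) auto
next
  case (Cons p ps)
  from Cons.prems obtain q qs' where qs: "qs = q # qs'"
    by (cases qs) auto
  have primes: "p \<in> monoid_primes S" "q \<in> monoid_primes S"
    and primes_ps: "\<forall>x \<in> set ps. x \<in> monoid_primes S" "\<forall>x \<in> set qs'. x \<in> monoid_primes S"
    and eq: "p @ concat ps = q @ concat qs'"
    using Cons.prems qs by auto
  have "concat ps \<in> S" "concat qs' \<in> S"
    using primes_ps monoid_primes_subset concat_in_submonoid[OF \<open>submonoid S\<close>] by blast+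
  then have "p = q"
    using stable_monoid_prime_prefix_eq[OF \<open>stable_monoid S\<close> primes _ _ eq] by blast
  then have "ps = qs'"
    using Cons.IH[OF primes_ps] eq by simp
  with \<open>p = q\<close> qs show ?case by simp
qed

theorem free_monoid_if_stable:
  "submonoid S \<Longrightarrow> stable_monoid S \<Longrightarrow> free_monoid S"
  unfolding free_monoid_def
  using prime_factorisation_exists prime_factorisation_unique by blast

locale graded_stable_monoid =
  fixes S :: "'a list set" and wt :: "'a list \<Rightarrow> nat"
  assumes submonoid: "submonoid S"
    and stable: "stable_monoid S"
    and wt_append: "u \<in> S \<Longrightarrow> v \<in> S \<Longrightarrow> wt (u @ v) = wt u + wt v"
    and finite_weight_class: "finite {x \<in> S. wt x = n}"
    and weight_class_0: "{x \<in> S. wt x = 0} = {[]}"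
begin

definition graded :: "nat \<Rightarrow> 'a list set" where
  "graded n = {x \<in> S. wt x = n}"

definition graded_primes :: "nat \<Rightarrow> 'a list set" where
  "graded_primes n = {p \<in> monoid_primes S. wt p = n}"

lemma wt_Nil [simp]: "wt [] = 0"
proof -
  have "[] \<in> {x \<in> S. wt x = 0}"
    by (simp add: weight_class_0)
  then show ?thesis by simp
qed

lemma finite_graded: "finite (graded n)"
  using finite_weight_class by (simp add: graded_def)

lemma graded_primes_subset: "graded_primes n \<subseteq> graded n"
  using monoid_primes_subset by (auto simp: graded_primes_def graded_def)

lemma finite_graded_primes: "finite (graded_primes n)"
  using graded_primes_subset finite_graded finite_subset by blast

lemma graded_primes_0: "graded_primes 0 = {}"
  using graded_primes_subset[of 0] weight_class_0 by (auto simp: graded_def graded_primes_def)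

lemma prime_split_exists:
  assumes "x \<in> S" "x \<noteq> []"
  obtains p w where "p \<in> monoid_primes S" "w \<in> S" "x = p @ w"
proof -
  obtain ps where ps: "\<forall>p \<in> set ps. p \<in> monoid_primes S" "concat ps = x"
    using prime_factorisation_exists[OF \<open>x \<in> S\<close>] by blast
  with \<open>x \<noteq> []\<close> obtain p ps' where "ps = p # ps'" by (cases ps) auto
  moreover have "concat ps' \<in> S"
    using ps \<open>ps = p # ps'\<close> monoid_primes_subset by (auto intro: concat_in_submonoid[OF submonoid])
  ultimately show thesis
    using that ps by auto
qed

lemma bij_betw_prime_split:
  "bij_betw (\<lambda>(p, w). p @ w) (\<Union>k \<in> {..n}. graded_primes k \<times> graded (n - k)) (graded n - {[]})"
  (is "bij_betw ?concat ?pairs _")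
proof (rule bij_betw_imageI)
  show "inj_on ?concat ?pairs"
  proof (rule inj_onI)
    fix x y assume "x \<in> ?pairs" "y \<in> ?pairs" and eq: "?concat x = ?concat y"
    then obtain p w q w' where "x = (p, w)" "y = (q, w')"
      and "p \<in> monoid_primes S" "q \<in> monoid_primes S" "w \<in> S" "w' \<in> S"
      by (auto simp: graded_primes_def graded_def)
    with eq stable_monoid_prime_prefix_eq[OF stable] show "x = y" by auto
  qed
  show "?concat ` ?pairs = graded n - {[]}"
  proof (intro equalityI subsetI)
    fix x assume "x \<in> ?concat ` ?pairs"
    then obtain k p w where "k \<le> n" "p \<in> monoid_primes S" "wt p = k" "w \<in> S" "wt w = n - k"
      and x: "x = p @ w"
      by (auto simp: graded_primes_def graded_def)
    moreover have "p \<in> S"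
      using \<open>p \<in> monoid_primes S\<close> monoid_primes_subset by blast
    ultimately show "x \<in> graded n - {[]}"
      using submonoid wt_append[of p w] by (auto simp: graded_def submonoid_def)
  next
    fix x assume x: "x \<in> graded n - {[]}"
    then obtain p w where pw: "p \<in> monoid_primes S" "w \<in> S" "x = p @ w"
      using prime_split_exists by (auto simp: graded_def)
    have "p \<in> S"
      using pw(1) monoid_primes_subset by blast
    with x pw have "wt p + wt w = n"
      using wt_append[of p w] by (auto simp: graded_def)
    with pw have "(p, w) \<in> graded_primes (wt p) \<times> graded (n - wt p)" "wt p \<in> {..n}"
      by (auto simp: graded_primes_def graded_def)
    then show "x \<in> ?concat ` ?pairs"
      using pw(3) by (auto intro!: rev_image_eqI[of "(p, w)"])
  qed
qed

lemma card_graded_minus_Nil: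
  "card (graded n - {[]}) = (\<Sum>k \<le> n. card (graded_primes k) * card (graded (n - k)))"
proof -
  have "card (graded n - {[]}) = card (\<Union>k \<in> {..n}. graded_primes k \<times> graded (n - k))"
    using bij_betw_same_card[OF bij_betw_prime_split] by simp
  also have "\<dots> = (\<Sum>k \<le> n. card (graded_primes k \<times> graded (n - k)))"
    using finite_graded_primes finite_graded by (intro card_UN_disjoint) (auto simp: graded_primes_def)
  finally show ?thesis by (simp add: card_cartesian_product)
qed

lemma fps_graded_eq:
  "Abs_fps (\<lambda>n. of_nat (card (graded n)) :: 'b::comm_semiring_1)
     = 1 + Abs_fps (\<lambda>n. of_nat (card (graded_primes n))) * Abs_fps (\<lambda>n. of_nat (card (graded n)))"
proof (rule fps_ext)
  fix n
  show "fps_nth (Abs_fps (\<lambda>n. of_nat (card (graded n)) :: 'b)) n =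
    fps_nth (1 + Abs_fps (\<lambda>n. of_nat (card (graded_primes n))) * Abs_fps (\<lambda>n. of_nat (card (graded n)))) n"
  proof (cases "n = 0")
    case True
    then show ?thesis by (simp add: graded_def weight_class_0 graded_primes_0)
  next
    case False
    then have "graded n - {[]} = graded n"
      by (auto simp: graded_def)
    then have "card (graded n) = (\<Sum>k \<le> n. card (graded_primes k) * card (graded (n - k)))"
      using card_graded_minus_Nil[of n] by (simp only:)
    then have "(of_nat (card (graded n)) :: 'b)
        = (\<Sum>k \<le> n. of_nat (card (graded_primes k)) * of_nat (card (graded (n - k))))"
      by simp
    with False show ?thesis
      by (simp add: fps_mult_nth atLeast0AtMost)
  qed
qed

end

lemma fib_comp_Nil_iff [simp]: "fib_comp N [] \<longleftrightarrow> N = 0"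
  by (auto simp: fib_comp_def)

lemma fib_comp_Cons_iff [simp]:
  "fib_comp N (x # c) \<longleftrightarrow> (x = 1 \<or> x = 2) \<and> x \<le> N \<and> fib_comp (N - x) c"
  by (auto simp: fib_comp_def)

lemma fib_comp_0_iff [simp]: "fib_comp 0 c \<longleftrightarrow> c = []"
  by (cases c) auto

lemma fib_comps_Suc_Suc:
  "{c. fib_comp (Suc (Suc N)) c} = (#) 1 ` {c. fib_comp (Suc N) c} \<union> (#) 2 ` {c. fib_comp N c}"
proof (intro equalityI subsetI)
  fix c assume "c \<in> {c. fib_comp (Suc (Suc N)) c}"
  then show "c \<in> (#) 1 ` {c. fib_comp (Suc N) c} \<union> (#) 2 ` {c. fib_comp N c}"
    by (cases c) auto
qed auto

lemma card_fib_comps: "finite {c. fib_comp N c} \<and> card {c. fib_comp N c} = fib (Suc N)"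
proof (induction N rule: fib.induct)
  case 1
  then show ?case by simp
next
  case 2
  have "c = [1]" if "fib_comp 1 c" for c
    using that by (cases c) auto
  then have "{c. fib_comp 1 c} = {[1]}"
    by auto
  then show ?case by simp
next
  case (3 N)
  have "card {c. fib_comp (Suc (Suc N)) c}
      = card ((#) 1 ` {c. fib_comp (Suc N) c}) + card ((#) 2 ` {c. fib_comp N c})"
    unfolding fib_comps_Suc_Suc using 3 by (intro card_Un_disjoint) auto
  with 3 show ?case
    by (simp add: fib_comps_Suc_Suc card_image)
qed

lemma M3_iff: "c \<in> M3 \<longleftrightarrow> set c \<subseteq> {1, 2} \<and> 3 dvd sum_list c \<and> (c \<noteq> [] \<longrightarrow> hd c = 1)"
  unfolding M3_def fib_comp_def by (cases c) (auto simp: dvd_def)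

lemma submonoid_M3: "submonoid M3"
  by (auto simp: submonoid_def M3_iff hd_append)

lemma stable_monoid_M3: "stable_monoid M3"
  by (auto simp: stable_monoid_def M3_iff dvd_add_right_iff)

lemma M3_weight: "c \<in> M3 \<Longrightarrow> sum_list c = 3 * weight c"
  by (auto simp: M3_iff weight_def)

lemma weight_append_M3: "u \<in> M3 \<Longrightarrow> v \<in> M3 \<Longrightarrow> weight (u @ v) = weight u + weight v"
  using M3_weight[of u] M3_weight[of v] unfolding weight_def[of "u @ v"] by simp

lemma M3_weight_0: "{c \<in> M3. weight c = 0} = {[]}"
proof -
  have "c = []" if "c \<in> M3" "weight c = 0" for c
    using that M3_weight[of c] by (cases c) (auto simp: M3_iff)
  then show ?thesis by (auto simp: M3_iff weight_def)
qed

lemma M3_weight_Suc: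
  "{c \<in> M3. weight c = Suc n} = (#) 1 ` {c. fib_comp (3 * n + 2) c}"
proof (intro equalityI subsetI)
  fix c assume c: "c \<in> {c \<in> M3. weight c = Suc n}"
  then have "sum_list c = 3 * Suc n" using M3_weight by simp
  with c show "c \<in> (#) 1 ` {c. fib_comp (3 * n + 2) c}"
    by (cases c) (auto simp: M3_iff fib_comp_def)
next
  fix c assume "c \<in> (#) 1 ` {c. fib_comp (3 * n + 2) c}"
  then obtain c' where "c = 1 # c'" "fib_comp (3 * n + 2) c'" by auto
  moreover have "3 dvd Suc (Suc (Suc (3 * n)))"
    by (simp add: dvd_def exI[of _ "Suc n"])
  ultimately show "c \<in> {c \<in> M3. weight c = Suc n}"
    by (auto simp: M3_iff fib_comp_def weight_def)
qed

interpretation M3: graded_stable_monoid M3 weight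
proof
  show "finite {x \<in> M3. weight x = n}" for n
    using card_fib_comps M3_weight_0 M3_weight_Suc by (cases n) auto
qed (simp_all add: submonoid_M3 stable_monoid_M3 M3_weight_0 weight_append_M3)

lemma card_M3_weight: "card {c \<in> M3. weight c = n} = (if n = 0 then 1 else fib (3 * n))"
proof (cases n)
  case 0
  then show ?thesis by (simp add: M3_weight_0)
next
  case (Suc m)
  have "card {c \<in> M3. weight c = n} = card {c. fib_comp (3 * m + 2) c}"
    unfolding Suc M3_weight_Suc by (simp add: card_image)
  also have "\<dots> = fib (Suc (3 * m + 2))"
    using card_fib_comps by blast
  also have "Suc (3 * m + 2) = 3 * n"
    using Suc by simp
  finally show ?thesis
    using Suc by simp
qed

lemma fps_card_M3_weight:
  "Abs_fps (\<lambda>n. of_nat (card {c \<in> M3. weight c = n}))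
     = Abs_fps (\<lambda>n. if n = 0 then 1 else of_nat (fib (3 * n)) :: 'a::comm_semiring_1)"
  by (rule fps_ext) (simp add: card_M3_weight)

lemma fib_add_6: "fib (n + 6) = 4 * fib (n + 3) + fib n"
  by (simp add: numeral_eq_Suc)

lemma fps_nth_quadratic:
  "fps_nth (1 - fps_const c * fps_X - fps_X ^ 2 :: 'a::comm_ring_1 fps) n
     = (if n = 0 then 1 else if n = 1 then - c else if n = 2 then - 1 else 0)"
  by (simp add: fps_X_power_nth)

lemma fps_fib_3_times_mult:
  "Abs_fps (\<lambda>n. if n = 0 then 1 else of_nat (fib (3 * n))) * (1 - 4 * fps_X - fps_X ^ 2)
     = (1 - 2 * fps_X - fps_X ^ 2 :: 'a::comm_ring_1 fps)"
  (is "?F * _ = _")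
proof -
  have "?F * (1 - 4 * fps_X - fps_X ^ 2) = ?F - fps_const 4 * (fps_X * ?F) - fps_X ^ 2 * ?F"
    by (simp add: algebra_simps numeral_fps_const)
  also have "\<dots> = 1 - fps_const 2 * fps_X - fps_X ^ 2"
  proof (rule fps_ext)
    fix n :: nat
    consider "n < 3" | m where "n = m + 3"
      using le_add_diff_inverse2[of 3 n] by (metis not_le)
    then show "fps_nth (?F - fps_const 4 * (fps_X * ?F) - fps_X ^ 2 * ?F) n
      = fps_nth (1 - fps_const 2 * fps_X - fps_X ^ 2 :: 'a fps) n"
    proof cases
      case 1
      then have "n = 0 \<or> n = 1 \<or> n = 2" by auto
      then show ?thesis
        by (elim disjE) (simp_all add: fps_nth_quadratic fps_X_power_mult_nth numeral_3_eq_3)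
    next
      case 2
      then have "3 * n = 3 * (m + 1) + 6" "3 * (n - 1) = 3 * (m + 1) + 3" "3 * (n - 2) = 3 * (m + 1)"
        by simp_all
      then have "fib (3 * n) = 4 * fib (3 * (n - 1)) + fib (3 * (n - 2))"
        by (simp only: fib_add_6)
      with 2 show ?thesis
        by (simp add: fps_nth_quadratic fps_X_power_mult_nth)
    qed
  qed
  finally show ?thesis
    by (simp add: numeral_fps_const)
qed

lemma fps_inverse_one_minus_divide:
  fixes a d :: "'a::field fps"
  assumes d: "fps_nth d 0 \<noteq> 0" and da: "fps_nth (d + a) 0 \<noteq> 0"
  shows "inverse (1 - a / (d + a)) = (d + a) / d"
proof -
  have "1 - a / (d + a) = (d + a) * inverse (d + a) - a * inverse (d + a)"
    using da by (simp add: fps_divide_unit inverse_mult_eq_1')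
  also have "\<dots> = d * inverse (d + a)"
    by (simp add: algebra_simps)
  finally show ?thesis
    using d da by (simp add: fps_inverse_mult fps_divide_unit mult.commute)
qed

lemma fps_eq_one_minus_if_eq_inverse:
  fixes F P G :: "'a::field fps"
  assumes "F = 1 + P * F" "F = inverse G" "fps_nth G 0 \<noteq> 0"
  shows "P = 1 - G"
proof -
  have "F * (1 - P) = 1"
    using assms(1) by (simp add: algebra_simps)
  then have "1 - P = inverse F"
    by (simp add: fps_inverse_unique)
  also have "\<dots> = G"
    using assms(2,3) by simp
  finally show ?thesis
    by (simp add: algebra_simps)
qed

theorem mainTheorem19:
  shows "free_monoid M3
    \<and> (\<forall>n. of_nat (card {p \<in> monoid_primes M3. weight p = n})
            = fps_nth (2 * fps_X / (1 - 2 * fps_X - fps_X ^ 2) :: rat fps) n)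
    \<and> Abs_fps (\<lambda>n. if n = 0 then 1 else of_nat (fib (3 * n)))
            = (1 + 2 * fps_X / (1 - 4 * fps_X - fps_X ^ 2) :: rat fps)
    \<and> (1 + 2 * fps_X / (1 - 4 * fps_X - fps_X ^ 2) :: rat fps)
            = inverse (1 - 2 * fps_X / (1 - 2 * fps_X - fps_X ^ 2))"
proof -
  define d :: "rat fps" where "d = 1 - 4 * fps_X - fps_X ^ 2"
  define a :: "rat fps" where "a = 2 * fps_X"
  define F :: "rat fps" where "F = Abs_fps (\<lambda>n. if n = 0 then 1 else of_nat (fib (3 * n)))"
  define P :: "rat fps" where "P = Abs_fps (\<lambda>n. of_nat (card (M3.graded_primes n)))"
  have d_a: "d + a = 1 - 2 * fps_X - fps_X ^ 2"
    by (simp add: d_def a_def algebra_simps)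
  have nonzero: "fps_nth d 0 \<noteq> 0" "fps_nth (d + a) 0 \<noteq> 0"
    by (simp_all add: d_a) (simp add: d_def)
  have "F * d = d + a"
    using fps_fib_3_times_mult unfolding d_a unfolding F_def d_def .
  then have F_quotient: "F = (d + a) / d"
    using nonzero(1) by (metis fps_divide_times_eq fps_nonzero_nth)
  then have F_eq: "F = 1 + a / d"
    using nonzero by (simp add: fps_divide_unit distrib_right inverse_mult_eq_1')
  have F_inverse: "F = inverse (1 - a / (d + a))"
    using fps_inverse_one_minus_divide[OF nonzero] F_quotient by simp
  have "F = 1 + P * F"
    using M3.fps_graded_eq unfolding M3.graded_def fps_card_M3_weight F_def P_def .
  then have "P = a / (d + a)"
    using fps_eq_one_minus_if_eq_inverse[OF _ F_inverse] nonzero by simp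
  then have "\<forall>n. of_nat (card {p \<in> monoid_primes M3. weight p = n}) = fps_nth (a / (d + a)) n"
    by (simp add: P_def M3.graded_primes_def fps_eq_iff)
  then show ?thesis
    using free_monoid_if_stable[OF submonoid_M3 stable_monoid_M3] F_eq F_inverse[unfolded F_eq]
    unfolding d_a unfolding F_def a_def d_def by blast
qed

end
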